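(* Let $p,n\in\mathbb N$ with $p\ge n\ge 7$, and let $G\in Ex(p;T_n^2)$. If $G$ is connected, then $\Delta(G)=n-4$ and $e(G)=\big[\tfrac{(n-4)p}{2}\big]$.
   Context: All graphs are finite and simple; a graph "contains" $H$ if it has a subgraph isomorphic to $H$. $[x]$ denotes the greatest integer not exceeding $x$; $e(G)$ is the number of edges and $\Delta(G)$ the maximum degree of $G$. For a graph $L$ and $p\in\mathbb N$, $ex(p;L)$ is the maximum number of edges in a graph on $p$ vertices containing no copy of $L$, and $Ex(p;L)$ is the set of graphs on $p$ vertices containing no copy of $L$ and having exactly $ex(p;L)$ edges. For $n\ge 5$, $T_n^2$ is the tree with vertex set $\{v_0,\ldots,v_{n-1}\}$ and edge set $\{v_0v_1,\ldots,v_0v_{n-3},\,v_{n-3}v_{n-2},\,v_{n-3}v_{n-1}\}$. *)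

theory Defs
  imports Main
begin

definition sgraph :: "'a set \<Rightarrow> 'a set set \<Rightarrow> bool" where
  "sgraph V E \<longleftrightarrow> finite V \<and> (\<forall>e\<in>E. \<exists>x y. x \<noteq> y \<and> x \<in> V \<and> y \<in> V \<and> e = {x, y})"

definition contains :: "'a set \<Rightarrow> 'a set set \<Rightarrow> 'b set \<Rightarrow> 'b set set \<Rightarrow> bool" where
  "contains V E VH EH \<longleftrightarrow> (\<exists>f. inj_on f VH \<and> f ` VH \<subseteq> V \<and> (\<forall>e\<in>EH. f ` e \<in> E))"

definition T2_verts :: "nat \<Rightarrow> nat set" where
  "T2_verts n = {0..<n}"

definition T2_edges :: "nat \<Rightarrow> nat set set" where
  "T2_edges n = {{0, i} | i. 1 \<le> i \<and> i \<le> n - 3} \<union> {{n - 3, n - 2}, {n - 3, n - 1}}"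

definition ex :: "nat \<Rightarrow> 'b set \<Rightarrow> 'b set set \<Rightarrow> nat" where
  "ex p VL EL = Max {card E | E. sgraph {0..<p} E \<and> \<not> contains {0..<p} E VL EL}"

definition in_Ex :: "nat \<Rightarrow> 'b set \<Rightarrow> 'b set set \<Rightarrow> 'a set \<Rightarrow> 'a set set \<Rightarrow> bool" where
  "in_Ex p VL EL V E \<longleftrightarrow> sgraph V E \<and> card V = p \<and> \<not> contains V E VL EL \<and> card E = ex p VL EL"

definition adj :: "'a set set \<Rightarrow> 'a \<Rightarrow> 'a \<Rightarrow> bool" where
  "adj E u v \<longleftrightarrow> {u, v} \<in> E"

definition connected_graph :: "'a set \<Rightarrow> 'a set set \<Rightarrow> bool" where
  "connected_graph V E \<longleftrightarrow> (\<forall>u\<in>V. \<forall>v\<in>V. (adj E)\<^sup>*\<^sup>* u v)"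

definition degree :: "'a set set \<Rightarrow> 'a \<Rightarrow> nat" where
  "degree E v = card {u. {v, u} \<in> E}"

definition max_degree :: "'a set \<Rightarrow> 'a set set \<Rightarrow> nat" where
  "max_degree V E = Max (degree E ` V)"

end

theory Submission
  imports Defs
begin

text \<open>
  The weight of a vertex set S is the sum over y in S of deg y plus the
  number of neighbours of y outside S; it is at least twice the number of edges meeting S.
  If |S| < n and the weight is below |S|(|S|-1), deleting the edges meeting S and making S
  a clique gives more edges and stays T_n^2-free, because a copy of the connected tree
  T_n^2 lies entirely inside S (too small) or entirely outside it.  Hence in an extremal
  graph no such light set exists.  T_n^2 is a fork (a centre with n-3 neighbours, one of
  which has two further neighbours), so around a vertex x of maximum degree d \<ge> n-3 the
  graph is very restricted, and a light set appears: n-1 neighbours of x if d \<ge> n-1, the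
  closed neighbourhood N[x] if d = n-2, and N[x] plus one outside vertex if d = n-3
  (connectivity supplies the edges leaving N[x]).  So \<Delta>(G) \<le> n-4 and 2e(G) \<le> (n-4)p.

  For k < p the circulant graph joining each of p cyclically arranged
  vertices to its k div 2 successors, plus the antipodal edges when k is odd, has maximum
  degree at most k and [kp/2] edges; for k = n-4 it is T_n^2-free.
\<close>

section \<open>Neighbourhoods and degrees\<close>

definition nb :: "'a set set \<Rightarrow> 'a \<Rightarrow> 'a set" where
  "nb E v = {u. {v, u} \<in> E}"

definition closed_nb :: "'a set set \<Rightarrow> 'a \<Rightarrow> 'a set" where
  "closed_nb E v = insert v (nb E v)"

lemma degree_nb: "degree E v = card (nb E v)"
  by (simp add: degree_def nb_def)

lemma sgraph_edgeD: "sgraph V E \<Longrightarrow> e \<in> E \<Longrightarrow> \<exists>a b. a \<noteq> b \<and> a \<in> V \<and> b \<in> V \<and> e = {a, b}"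
  by (auto simp: sgraph_def)

lemma sgraph_finite_vertices: "sgraph V E \<Longrightarrow> finite V"
  by (simp add: sgraph_def)

lemma sgraph_edges_subset: "sgraph V E \<Longrightarrow> E \<subseteq> Pow V"
  by (auto simp: sgraph_def)

lemma sgraph_finite_edges: "sgraph V E \<Longrightarrow> finite E"
  by (meson finite_Pow_iff finite_subset sgraph_finite_vertices sgraph_edges_subset)

lemma sgraph_card_edge: "sgraph V E \<Longrightarrow> e \<in> E \<Longrightarrow> card e = 2"
  by (auto simp: sgraph_def)

lemma nb_subset: "sgraph V E \<Longrightarrow> nb E v \<subseteq> V"
  unfolding nb_def sgraph_def by (auto simp: doubleton_eq_iff)

lemma finite_nb: "sgraph V E \<Longrightarrow> finite (nb E v)"
  by (metis finite_subset nb_subset sgraph_finite_vertices)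

lemma nb_sym: "u \<in> nb E v \<longleftrightarrow> v \<in> nb E u"
  by (simp add: nb_def insert_commute)

lemma not_in_nb: "sgraph V E \<Longrightarrow> v \<notin> nb E v"
  unfolding nb_def sgraph_def by auto

lemma nb_vertex: "sgraph V E \<Longrightarrow> u \<in> nb E v \<Longrightarrow> v \<in> V"
  by (metis nb_subset nb_sym subsetD)

lemma degree_outside: "sgraph V E \<Longrightarrow> v \<notin> V \<Longrightarrow> degree E v = 0"
  by (metis degree_nb card.empty ex_in_conv nb_vertex)

lemma card_closed_nb: "sgraph V E \<Longrightarrow> card (closed_nb E v) = degree E v + 1"
  by (simp add: closed_nb_def degree_nb finite_nb not_in_nb)

lemma degree_incident_edges:
  assumes "sgraph V E" shows "degree E v = card {e\<in>E. v \<in> e}"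
proof -
  have "bij_betw (\<lambda>u. {v, u}) (nb E v) {e\<in>E. v \<in> e}"
  proof (rule bij_betwI')
    fix x y assume "x \<in> nb E v" "y \<in> nb E v"
    then show "({v, x} = {v, y}) = (x = y)" using not_in_nb[OF assms] by (metis doubleton_eq_iff)
  next
    fix x assume "x \<in> nb E v" then show "{v, x} \<in> {e\<in>E. v \<in> e}" by (simp add: nb_def)
  next
    fix e assume "e \<in> {e\<in>E. v \<in> e}"
    then obtain a b where "e = {a, b}" "e \<in> E" "v \<in> e" using sgraph_edgeD[OF assms] by blast
    then show "\<exists>x\<in>nb E v. e = {v, x}"
      unfolding nb_def by (metis empty_iff insertE insert_commute mem_Collect_eq)
  qed
  then show ?thesis by (simp add: degree_nb bij_betw_same_card)
qed

lemma sum_degree_incidences: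
  assumes "sgraph V E" "finite S"
  shows "(\<Sum>y\<in>S. degree E y) = (\<Sum>e\<in>E. card (e \<inter> S))"
proof -
  have "(\<Sum>y\<in>S. degree E y) = (\<Sum>y\<in>S. \<Sum>e\<in>E. if y \<in> e then 1 else 0)"
    using degree_incident_edges[OF assms(1)]
    by (simp add: sum.If_cases sgraph_finite_edges[OF assms(1)] Int_def)
  also have "\<dots> = (\<Sum>e\<in>E. \<Sum>y\<in>S. if y \<in> e then 1 else 0)" by (rule sum.swap)
  also have "\<dots> = (\<Sum>e\<in>E. card (e \<inter> S))"
    using assms(2) by (simp add: sum.If_cases Int_def conj_commute)
  finally show ?thesis .
qed

lemma handshake:
  assumes "sgraph V E" shows "(\<Sum>y\<in>V. degree E y) = 2 * card E"
proof -
  have "(\<Sum>y\<in>V. degree E y) = (\<Sum>e\<in>E. card (e \<inter> V))"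
    using sum_degree_incidences assms sgraph_finite_vertices by blast
  also have "\<dots> = (\<Sum>e\<in>E. 2)"
  proof (rule sum.cong)
    fix e assume "e \<in> E"
    then show "card (e \<inter> V) = 2"
      using sgraph_edges_subset[OF assms] sgraph_card_edge[OF assms] by (metis Int_absorb2 PowD subsetD)
  qed simp
  finally show ?thesis by simp
qed

lemma edges_le_degree_bound:
  assumes "sgraph V E" "\<forall>y\<in>V. degree E y \<le> k"
  shows "2 * card E \<le> k * card V"
  using handshake[OF assms(1)] sum_bounded_above[of V "degree E" k] assms(2)
  by (simp add: mult.commute)

lemma connected_leaving_edge:
  assumes "connected_graph V E" "x \<in> S" "x \<in> V" "y \<in> V" "y \<notin> S"
  shows "\<exists>a\<in>S. \<exists>b. b \<notin> S \<and> {a, b} \<in> E"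
proof -
  have "(adj E)\<^sup>*\<^sup>* x y" using assms unfolding connected_graph_def by blast
  then show ?thesis using assms(2,5)
  proof (induction rule: rtranclp_induct)
    case (step y z)
    then show ?case by (cases "y \<in> S") (auto simp: adj_def)
  qed simp
qed

section \<open>The extremal number\<close>

lemma finite_ex_candidates:
  "finite {card E | E. sgraph {0..<p::nat} E \<and> \<not> contains {0..<p} E VL EL}"
proof (rule finite_subset)
  show "{card E | E. sgraph {0..<p} E \<and> \<not> contains {0..<p} E VL EL} \<subseteq> card ` Pow (Pow {0..<p})"
    using sgraph_edges_subset by blast
qed simp

definition pullback :: "(nat \<Rightarrow> 'a) \<Rightarrow> nat \<Rightarrow> 'a set set \<Rightarrow> nat set set" where
  "pullback h p E = {e. e \<subseteq> {0..<p} \<and> h ` e \<in> E}"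

lemma card_pullback:
  assumes sg: "sgraph V E" and h: "bij_betw h {0..<p} V"
  shows "card (pullback h p E) = card E"
proof -
  have injh: "inj_on h {0..<p}" and imh: "h ` {0..<p} = V" using h by (auto simp: bij_betw_def)
  have "bij_betw (image h) (pullback h p E) E"
  proof (rule bij_betwI')
    fix a b assume "a \<in> pullback h p E" "b \<in> pullback h p E"
    then show "(h ` a = h ` b) = (a = b)"
      using injh by (auto simp: pullback_def inj_on_image_eq_iff)
  next
    fix e assume e: "e \<in> E"
    then have "e \<subseteq> V" using sgraph_edges_subset[OF sg] by auto
    then have "h ` (inv_into {0..<p} h ` e) = e" "inv_into {0..<p} h ` e \<subseteq> {0..<p}"
      using imh by (auto simp: image_inv_into_cancel intro: inv_into_into)
    then show "\<exists>a\<in>pullback h p E. e = h ` a"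
      using e unfolding pullback_def by (metis (mono_tags, lifting) mem_Collect_eq)
  qed (simp add: pullback_def)
  then show ?thesis by (simp add: bij_betw_same_card)
qed

lemma sgraph_pullback:
  assumes sg: "sgraph V E" and injh: "inj_on h {0..<p}"
  shows "sgraph {0..<p} (pullback h p E)"
  unfolding sgraph_def
proof (intro conjI ballI)
  fix e assume "e \<in> pullback h p E"
  then have e: "e \<subseteq> {0..<p}" "h ` e \<in> E" by (auto simp: pullback_def)
  then obtain a b where ab: "a \<noteq> b" "h ` e = {a, b}" using sgraph_edgeD[OF sg] by blast
  then obtain a' b' where a'b': "a' \<in> e" "b' \<in> e" "h a' = a" "h b' = b"
    by (metis imageE insertI1 insert_commute)
  moreover have "\<forall>z\<in>e. z = a' \<or> z = b'"
  proof
    fix z assume "z \<in> e"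
    then have "h z \<in> {a, b}" using ab by auto
    then show "z = a' \<or> z = b'" using injh e(1) \<open>z \<in> e\<close> a'b'
      by (auto simp: inj_on_def subset_iff)
  qed
  ultimately show "\<exists>x y. x \<noteq> y \<and> x \<in> {0..<p} \<and> y \<in> {0..<p} \<and> e = {x, y}"
    using e(1) ab(1) by (intro exI[of _ a'] exI[of _ b']) auto
qed simp

lemma contains_pullback:
  assumes "contains {0..<p} (pullback h p E) VL EL" and "inj_on h {0..<p}" "h ` {0..<p} \<subseteq> V"
  shows "contains V E VL EL"
proof -
  obtain f where f: "inj_on f VL" "f ` VL \<subseteq> {0..<p}" "\<forall>e\<in>EL. f ` e \<in> pullback h p E"
    using assms(1) by (auto simp: contains_def)
  have "inj_on (h \<circ> f) VL" using f(1,2) assms(2) by (simp add: comp_inj_on inj_on_subset)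
  moreover have "(h \<circ> f) ` VL \<subseteq> V" using f(2) assms(3) by (metis image_comp image_mono order_trans)
  moreover have "\<forall>e\<in>EL. (h \<circ> f) ` e \<in> E" using f(3) by (simp add: pullback_def image_comp)
  ultimately show ?thesis unfolding contains_def by blast
qed

text \<open>Every L-free graph on p vertices has at most ex(p;L) edges: relabel it onto {0..<p}.\<close>
lemma card_le_ex:
  assumes sg: "sgraph V E" and cV: "card V = p" and free: "\<not> contains V E VL EL"
  shows "card E \<le> ex p VL EL"
proof -
  obtain h where h: "bij_betw h {0..<p} V"
    using ex_bij_betw_nat_finite[OF sgraph_finite_vertices[OF sg]] cV by blast
  then have inj: "inj_on h {0..<p}" and im: "h ` {0..<p} = V" by (auto simp: bij_betw_def)
  have "sgraph {0..<p} (pullback h p E)" by (rule sgraph_pullback[OF sg inj])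
  moreover have "\<not> contains {0..<p} (pullback h p E) VL EL"
    using contains_pullback[of p h E VL EL V] inj im free by blast
  ultimately have "card (pullback h p E) \<le> ex p VL EL"
    unfolding ex_def by (intro Max_ge[OF finite_ex_candidates]) blast
  then show ?thesis using card_pullback[OF sg h] by simp
qed

section \<open>Copies of T_n^2\<close>

lemma T2_spoke: "1 \<le> i \<Longrightarrow> i \<le> n - 3 \<Longrightarrow> {0, i} \<in> T2_edges n"
  by (auto simp: T2_edges_def)

lemma T2_edge_subset: "n \<ge> 5 \<Longrightarrow> e \<in> T2_edges n \<Longrightarrow> e \<subseteq> {0..<n}"
  by (auto simp: T2_edges_def)

text \<open>T_n^2 is connected: a vertex property that is invariant along edges is constant.\<close>
lemma T2_connected:
  assumes n5: "n \<ge> 5" and inv: "\<And>a b. {a, b} \<in> T2_edges n \<Longrightarrow> P a \<longleftrightarrow> P b" and i: "i < n"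
  shows "P i \<longleftrightarrow> P 0"
proof -
  have spoke: "\<And>j. 1 \<le> j \<Longrightarrow> j \<le> n - 3 \<Longrightarrow> P j \<longleftrightarrow> P 0" using inv T2_spoke by metis
  have "{n-3, n-2} \<in> T2_edges n" "{n-3, n-1} \<in> T2_edges n" by (auto simp: T2_edges_def)
  then have "P (n-2) \<longleftrightarrow> P (n-3)" "P (n-1) \<longleftrightarrow> P (n-3)" using inv by blast+
  moreover have "P (n-3) \<longleftrightarrow> P 0" using spoke n5 by simp
  moreover consider "i = 0" | "1 \<le> i \<and> i \<le> n - 3" | "i = n - 2" | "i = n - 1" using i n5 by linarith
  ultimately show ?thesis using spoke by cases auto
qed

lemma contains_T2_of_list:
  assumes xs: "distinct xs" "length xs = n" "set xs \<subseteq> V"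
    and spokes: "\<And>i. 1 \<le> i \<Longrightarrow> i \<le> n - 3 \<Longrightarrow> {xs ! 0, xs ! i} \<in> E"
    and leaves: "{xs ! (n-3), xs ! (n-2)} \<in> E" "{xs ! (n-3), xs ! (n-1)} \<in> E"
  shows "contains V E (T2_verts n) (T2_edges n)"
  unfolding contains_def T2_verts_def
proof (intro exI[of _ "nth xs"] conjI ballI)
  show "inj_on ((!) xs) {0..<n}" using xs by (simp add: inj_on_nth)
  show "(!) xs ` {0..<n} \<subseteq> V" using xs by (auto simp: nth_mem subset_iff)
next
  fix e assume "e \<in> T2_edges n"
  then consider (spoke) i where "e = {0, i}" "1 \<le> i" "i \<le> n - 3"
    | (leaf) "e = {n-3, n-2} \<or> e = {n-3, n-1}"
    unfolding T2_edges_def by blast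
  then show "(!) xs ` e \<in> E"
    by cases (use spokes leaves in auto)
qed

text \<open>
  T_n^2 is a fork: a centre x = v_0, a neighbour u = v_{n-3} of x carrying two more leaves
  w1, w2, and n-4 further neighbours of x.  Any such configuration is a copy of T_n^2.
\<close>
lemma fork_contains_T2:
  assumes sg: "sgraph V E" and n5: "n \<ge> 5" and u: "u \<in> nb E x"
    and w: "w1 \<in> nb E u" "w2 \<in> nb E u" "w1 \<noteq> w2" "w1 \<noteq> x" "w2 \<noteq> x"
    and big: "n - 4 \<le> card (nb E x - {u, w1, w2})"
  shows "contains V E (T2_verts n) (T2_edges n)"
proof -
  obtain A where A: "A \<subseteq> nb E x - {u, w1, w2}" "card A = n - 4"
    using obtain_subset_with_card_n[OF big] by blast
  then have "finite A" using finite_nb[OF sg] finite_subset by (metis finite_Diff)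
  then obtain as where as: "set as = A" "distinct as" using finite_distinct_list by blast
  have las: "length as = n - 4" using as A distinct_card by fastforce
  define xs where "xs = (x # as) @ [u, w1, w2]"
  have "x \<notin> nb E x" "u \<noteq> x" "u \<noteq> w1" "u \<noteq> w2"
    using not_in_nb[OF sg] u w by auto
  then have distinct: "distinct xs" using as A w by (auto simp: xs_def)
  have length: "length xs = n" using las n5 by (simp add: xs_def)
  have "x \<in> V" using nb_vertex[OF sg] u nb_sym by metis
  then have vertices: "set xs \<subseteq> V" using A nb_subset[OF sg] u w as by (auto simp: xs_def)
  have xs0: "xs ! 0 = x" by (simp add: xs_def)
  have front: "xs ! i \<in> nb E x" if "1 \<le> i" "i \<le> n - 4" for i
  proof -
    have "i < length (x # as)" "i \<noteq> 0" using that las by auto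
    then have "xs ! i = (x # as) ! i" unfolding xs_def by (meson nth_append_left)
    also have "\<dots> = as ! (i - 1)" using \<open>i \<noteq> 0\<close> by (simp add: nth_Cons')
    finally have "xs ! i = as ! (i - 1)" .
    moreover have "i - 1 < length as" using that las by linarith
    then have "as ! (i - 1) \<in> A" using as(1) nth_mem by metis
    ultimately show ?thesis using A by auto
  qed
  have tail: "xs ! (length (x # as) + j) = [u, w1, w2] ! j" for j
    unfolding xs_def by (rule nth_append_length_plus)
  have "n - 3 = length (x # as) + 0" "n - 2 = length (x # as) + 1" "n - 1 = length (x # as) + 2"
    using las n5 by auto
  then have xsu: "xs ! (n-3) = u" and xsw: "xs ! (n-2) = w1" "xs ! (n-1) = w2"
    using tail[of 0] tail[of 1] tail[of 2] by (simp_all add: numeral_2_eq_2)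
  have spokes: "{xs ! 0, xs ! i} \<in> E" if "1 \<le> i" "i \<le> n - 3" for i
  proof (cases "i \<le> n - 4")
    case True then show ?thesis using front[OF that(1)] xs0 by (simp add: nb_def)
  next
    case False then have "i = n - 3" using that n5 by linarith
    then show ?thesis using xs0 xsu u by (simp add: nb_def)
  qed
  show ?thesis
    using w xsu xsw by (intro contains_T2_of_list[OF distinct length vertices spokes]) (auto simp: nb_def)
qed

text \<open>Conversely a copy of T_n^2 needs a vertex of degree at least n-3.\<close>
lemma T2_free_if_degree_le:
  assumes sg: "sgraph V E" and n5: "n \<ge> 5" and dg: "\<forall>y\<in>V. degree E y \<le> n - 4"
  shows "\<not> contains V E (T2_verts n) (T2_edges n)"
proof
  assume "contains V E (T2_verts n) (T2_edges n)"
  then obtain f where f: "inj_on f {0..<n}" "f ` {0..<n} \<subseteq> V" "\<forall>e\<in>T2_edges n. f ` e \<in> E"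
    by (auto simp: contains_def T2_verts_def)
  have "f ` {1..n-3} \<subseteq> nb E (f 0)"
    using f(3) T2_spoke by (force simp: nb_def)
  moreover have "inj_on f {1..n-3}" using f(1) by (rule inj_on_subset) auto
  then have "card (f ` {1..n-3}) = n - 3" by (simp add: card_image)
  ultimately have "n - 3 \<le> degree E (f 0)"
    using card_mono[OF finite_nb[OF sg]] by (metis degree_nb)
  moreover have "f 0 \<in> V" using f(2) n5 by auto
  ultimately show False using dg n5 by fastforce
qed

section \<open>Replacing a light vertex set by a clique\<close>

text \<open>
  An edge inside S is counted twice, an edge leaving S twice as well (once by degree,
  once as an outside neighbour), so the weight bounds twice the number of edges meeting S.
\<close>
definition weight :: "'a set set \<Rightarrow> 'a set \<Rightarrow> nat" where
  "weight E S = (\<Sum>y\<in>S. degree E y + card (nb E y - S))"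

lemma weight_term_with_inner_neighbour:
  assumes sg: "sgraph V E" and u: "u \<in> nb E w" "u \<in> S"
  shows "degree E w + card (nb E w - S) \<le> 2 * degree E w - 1"
proof -
  have "nb E w - S \<subseteq> nb E w - {u}" using u by auto
  then have "card (nb E w - S) \<le> degree E w - 1"
    using u finite_nb[OF sg] by (metis card_Diff_singleton card_mono degree_nb finite_Diff)
  moreover have "1 \<le> degree E w" using u finite_nb[OF sg]
    by (metis card_0_eq degree_nb empty_iff less_one not_le)
  ultimately show ?thesis by linarith
qed

lemma weight_insert_closed_nb:
  assumes sg: "sgraph V E" and w: "w \<notin> closed_nb E x"
  shows "weight E (insert w (closed_nb E x)) =
    (degree E w + card (nb E w - insert w (closed_nb E x))) + degree E x
    + (\<Sum>u\<in>nb E x. degree E u + card (nb E u - insert w (closed_nb E x)))"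
proof -
  have "nb E x - insert w (closed_nb E x) = {}" by (auto simp: closed_nb_def)
  then show ?thesis using w finite_nb[OF sg] not_in_nb[OF sg, of x]
    by (simp add: weight_def closed_nb_def)
qed

lemma card_leaving_edges_le:
  assumes sg: "sgraph V E" and finS: "finite S"
  shows "card {e\<in>E. e \<inter> S \<noteq> {} \<and> e - S \<noteq> {}} \<le> (\<Sum>y\<in>S. card (nb E y - S))"
proof -
  have "card {e\<in>E. e \<inter> S \<noteq> {} \<and> e - S \<noteq> {}} \<le> card (\<Union>y\<in>S. (\<lambda>t. {y, t}) ` (nb E y - S))"
  proof (rule card_mono)
    show "finite (\<Union>y\<in>S. (\<lambda>t. {y, t}) ` (nb E y - S))" using finS finite_nb[OF sg] by auto
    show "{e\<in>E. e \<inter> S \<noteq> {} \<and> e - S \<noteq> {}} \<subseteq> (\<Union>y\<in>S. (\<lambda>t. {y, t}) ` (nb E y - S))"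
    proof
      fix e assume "e \<in> {e\<in>E. e \<inter> S \<noteq> {} \<and> e - S \<noteq> {}}"
      then have e: "e \<in> E" "e \<inter> S \<noteq> {}" "e - S \<noteq> {}" by auto
      then obtain a b where ab: "e = {a, b}" using sgraph_edgeD[OF sg] by blast
      show "e \<in> (\<Union>y\<in>S. (\<lambda>t. {y, t}) ` (nb E y - S))"
      proof (cases "a \<in> S")
        case True then show ?thesis using e ab by (auto simp: nb_def)
      next
        case False
        then have "b \<in> S" "a \<in> nb E b" "e = {b, a}"
          using e ab by (auto simp: nb_def insert_commute)
        then show ?thesis using False by blast
      qed
    qed
  qed
  also have "\<dots> \<le> (\<Sum>y\<in>S. card ((\<lambda>t. {y, t}) ` (nb E y - S)))"
    by (rule card_UN_le[OF finS])
  also have "\<dots> \<le> (\<Sum>y\<in>S. card (nb E y - S))"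
    by (rule sum_mono) (simp add: card_image_le finite_nb[OF sg])
  finally show ?thesis .
qed

lemma edges_meeting_le_weight:
  assumes sg: "sgraph V E" and SV: "S \<subseteq> V"
  shows "2 * card {e\<in>E. e \<inter> S \<noteq> {}} \<le> weight E S"
proof -
  define Et where "Et = {e\<in>E. e \<inter> S \<noteq> {}}"
  define Ec where "Ec = {e\<in>E. e \<inter> S \<noteq> {} \<and> e - S \<noteq> {}}"
  have finE: "finite E" using sgraph_finite_edges[OF sg] .
  have finS: "finite S" using SV sgraph_finite_vertices[OF sg] finite_subset by blast
  have split: "card (e \<inter> S) + card (e - S) = 2" if "e \<in> E" for e
    using sgraph_card_edge[OF sg that] by (metis card_Int_Diff card.infinite zero_neq_numeral)
  have "2 * card Et = (\<Sum>e\<in>Et. card (e \<inter> S)) + (\<Sum>e\<in>Et. card (e - S))"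
    using split by (simp add: Et_def sum.distrib[symmetric])
  also have "(\<Sum>e\<in>Et. card (e \<inter> S)) = (\<Sum>y\<in>S. degree E y)"
    using sum_degree_incidences[OF sg finS]
    by (simp add: Et_def finE sum.mono_neutral_left[of E "{e\<in>E. e \<inter> S \<noteq> {}}"])
  also have "(\<Sum>e\<in>Et. card (e - S)) = (\<Sum>e\<in>Ec. card (e - S))"
  proof (rule sum.mono_neutral_right)
    show "finite Et" using finE by (simp add: Et_def)
    show "\<forall>e\<in>Et - Ec. card (e - S) = 0" unfolding Ec_def Et_def by force
  qed (auto simp: Ec_def Et_def)
  also have "\<dots> \<le> card Ec"
  proof -
    have "card (e - S) \<le> 1" if "e \<in> Ec" for e
    proof -
      have "e \<in> E" "e \<inter> S \<noteq> {}" "finite e" using that sgraph_card_edge[OF sg]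
        by (auto simp: Ec_def card_ge_0_finite)
      then have "1 \<le> card (e \<inter> S)" by (simp add: Suc_le_eq card_gt_0_iff)
      then show ?thesis using split[OF \<open>e \<in> E\<close>] by linarith
    qed
    then show ?thesis using sum_mono[of Ec "\<lambda>e. card (e - S)" "\<lambda>_. 1"] by simp
  qed
  also have "\<dots> \<le> (\<Sum>y\<in>S. card (nb E y - S))"
    unfolding Ec_def by (rule card_leaving_edges_le[OF sg finS])
  finally show ?thesis by (simp add: Et_def weight_def sum.distrib)
qed

definition clique_replace :: "'a set set \<Rightarrow> 'a set \<Rightarrow> 'a set set" where
  "clique_replace E S = {e\<in>E. e \<inter> S = {}} \<union> {A. A \<subseteq> S \<and> card A = 2}"

lemma sgraph_clique_replace:
  assumes "sgraph V E" "S \<subseteq> V" shows "sgraph V (clique_replace E S)"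
proof -
  have "\<exists>x y. x \<noteq> y \<and> x \<in> V \<and> y \<in> V \<and> A = {x, y}" if "A \<subseteq> S" "card A = 2" for A
    using that assms(2) unfolding card_2_iff by blast
  then show ?thesis using assms(1) unfolding sgraph_def clique_replace_def by blast
qed

lemma clique_replace_edge:
  assumes "{a, b} \<in> clique_replace E S" shows "a \<in> S \<longleftrightarrow> b \<in> S"
  using assms unfolding clique_replace_def by auto

text \<open>
  As T_n^2 is connected, a copy of it in the new graph lies inside S (impossible when
  |S| < n) or avoids S, and then it already was a copy in the old graph.
\<close>
lemma T2_free_clique_replace:
  assumes free: "\<not> contains V E (T2_verts n) (T2_edges n)" and n5: "n \<ge> 5"
    and finS: "finite S" and cS: "card S < n"
  shows "\<not> contains V (clique_replace E S) (T2_verts n) (T2_edges n)"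
proof
  assume "contains V (clique_replace E S) (T2_verts n) (T2_edges n)"
  then obtain f where f: "inj_on f {0..<n}" "f ` {0..<n} \<subseteq> V"
    "\<forall>e\<in>T2_edges n. f ` e \<in> clique_replace E S"
    by (auto simp: contains_def T2_verts_def)
  have "f a \<in> S \<longleftrightarrow> f b \<in> S" if "{a, b} \<in> T2_edges n" for a b
    using f(3) that clique_replace_edge[of "f a" "f b"] by force
  then have same_side: "f i \<in> S \<longleftrightarrow> f 0 \<in> S" if "i < n" for i
    using T2_connected[OF n5 _ that, of "\<lambda>i. f i \<in> S"] by blast
  show False
  proof (cases "f 0 \<in> S")
    case True
    then have "f ` {0..<n} \<subseteq> S" using same_side by auto
    then have "card (f ` {0..<n}) \<le> card S" by (rule card_mono[OF finS])
    then show False using card_image[OF f(1)] cS by simp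
  next
    case False
    have "f ` e \<in> E" if e: "e \<in> T2_edges n" for e
    proof -
      have "f ` e \<inter> S = {}" using same_side False T2_edge_subset[OF n5 e] by auto
      moreover have "e \<noteq> {}" using e by (auto simp: T2_edges_def)
      ultimately show ?thesis using f(3) e unfolding clique_replace_def by auto
    qed
    then show False using free f(1,2) unfolding contains_def T2_verts_def by blast
  qed
qed

lemma card_clique_replace:
  assumes sg: "sgraph V E" and SV: "S \<subseteq> V" and light: "weight E S < card S * (card S - 1)"
  shows "card E < card (clique_replace E S)"
proof -
  define Et where "Et = {e\<in>E. e \<inter> S \<noteq> {}}"
  define P where "P = {A. A \<subseteq> S \<and> card A = 2}"
  have finS: "finite S" using SV sgraph_finite_vertices[OF sg] finite_subset by blast
  have finE: "finite E" using sgraph_finite_edges[OF sg] .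
  have "2 * card Et < card S * (card S - 1)"
    using edges_meeting_le_weight[OF sg SV] light by (simp add: Et_def)
  moreover have "card P = card S * (card S - 1) div 2"
    unfolding P_def using n_subsets[OF finS] by (simp add: choose_two)
  moreover have "even (card S * (card S - 1))" by (cases "even (card S)") auto
  ultimately have "card Et < card P" by fastforce
  moreover have "clique_replace E S = (E - Et) \<union> P" "(E - Et) \<inter> P = {}"
    unfolding clique_replace_def Et_def P_def by (auto simp: card_2_iff)
  moreover have "finite P" unfolding P_def using finS by (simp add: finite_subset[of _ "Pow S"] subset_iff)
  moreover have "card (E - Et) = card E - card Et" "card Et \<le> card E"
    using finE by (simp_all add: Et_def card_Diff_subset card_mono)
  ultimately show ?thesis using finE by (simp add: card_Un_disjoint)
qed

lemma clique_replacement_gains: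
  assumes sg: "sgraph V E" and free: "\<not> contains V E (T2_verts n) (T2_edges n)"
    and n5: "n \<ge> 5" and SV: "S \<subseteq> V" and cS: "card S < n"
    and light: "weight E S < card S * (card S - 1)"
  shows "card E < ex (card V) (T2_verts n) (T2_edges n)"
proof -
  have "finite S" using SV sgraph_finite_vertices[OF sg] finite_subset by blast
  then have "card (clique_replace E S) \<le> ex (card V) (T2_verts n) (T2_edges n)"
    using card_le_ex sgraph_clique_replace[OF sg SV] T2_free_clique_replace[OF free n5] cS by blast
  then show ?thesis using card_clique_replace[OF sg SV light] by linarith
qed

section \<open>Local structure of T_n^2-free graphs\<close>

locale T2_free_graph =
  fixes V :: "'a set" and E :: "'a set set" and n :: nat
  assumes sg: "sgraph V E" and n5: "5 \<le> n"
    and T2_free: "\<not> contains V E (T2_verts n) (T2_edges n)"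
begin

lemma no_fork:
  assumes "u \<in> nb E x" "w1 \<in> nb E u" "w2 \<in> nb E u" "w1 \<noteq> w2" "w1 \<noteq> x" "w2 \<noteq> x"
  shows "card (nb E x - {u, w1, w2}) < n - 4"
  using fork_contains_T2[OF sg n5 assms] T2_free by linarith

lemma outer_neighbours_le_1:
  assumes dx: "n - 3 \<le> degree E x" and u: "u \<in> nb E x"
  shows "card (nb E u - closed_nb E x) \<le> 1"
proof -
  have "w1 = w2" if w: "w1 \<in> nb E u - closed_nb E x" "w2 \<in> nb E u - closed_nb E x" for w1 w2
  proof (rule ccontr)
    assume "w1 \<noteq> w2"
    have w': "w1 \<in> nb E u" "w2 \<in> nb E u" "w1 \<noteq> x" "w2 \<noteq> x" "w1 \<notin> nb E x" "w2 \<notin> nb E x"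
      using w by (auto simp: closed_nb_def)
    then have "nb E x - {u, w1, w2} = nb E x - {u}" by auto
    then have "card (nb E x - {u, w1, w2}) = degree E x - 1"
      using u finite_nb[OF sg] by (simp add: degree_nb)
    moreover have "card (nb E x - {u, w1, w2}) < n - 4"
      using no_fork[OF u w'(1,2) \<open>w1 \<noteq> w2\<close> w'(3,4)] .
    ultimately show False using dx by linarith
  qed
  then show ?thesis using finite_nb[OF sg] by (simp add: card_le_Suc0_iff_eq)
qed

lemma escaping_neighbour:
  assumes dx: "n - 2 \<le> degree E x" and u: "u \<in> nb E x" and t: "t \<in> nb E u - closed_nb E x"
  shows "nb E u \<subseteq> {x, t}"
proof
  fix w assume w: "w \<in> nb E u"
  show "w \<in> {x, t}"
  proof (rule ccontr)
    assume "w \<notin> {x, t}"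
    have "card (nb E x) - card {u, w} \<le> card (nb E x - {u, w})"
      by (rule diff_card_le_card_Diff) simp
    moreover have "card {u, w} \<le> 2" by (simp add: card_insert_le_m1)
    moreover have "nb E x - {u, t, w} = nb E x - {u, w}" using t by (auto simp: closed_nb_def)
    ultimately have "n - 4 \<le> card (nb E x - {u, t, w})" using dx by (simp add: degree_nb)
    moreover have "t \<noteq> x" "t \<in> nb E u" using t by (auto simp: closed_nb_def)
    ultimately show False using no_fork[OF u _ w, of t] \<open>w \<notin> {x, t}\<close> by force
  qed
qed

lemma escaping_neighbour_weight:
  assumes dx: "n - 2 \<le> degree E x" and u: "u \<in> nb E x" and t: "t \<in> nb E u - closed_nb E x"
  shows "degree E u + card (nb E u - closed_nb E x) \<le> 3"
proof -
  have sub: "nb E u \<subseteq> {x, t}" by (rule escaping_neighbour[OF assms])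
  moreover have "card {x, t} \<le> 2" by (simp add: card_insert_if)
  ultimately have "degree E u \<le> 2" unfolding degree_nb using card_mono[OF _ sub] by simp
  moreover have "nb E u - closed_nb E x \<subseteq> {t}" using sub by (auto simp: closed_nb_def)
  then have "card (nb E u - closed_nb E x) \<le> 1" using card_mono[of "{t}"] by simp
  ultimately show ?thesis by simp
qed

lemma neighbour_degree_le_2:
  assumes dx: "n - 1 \<le> degree E x" and u: "u \<in> nb E x"
  shows "degree E u \<le> 2"
proof -
  have "w1 = w2" if w: "w1 \<in> nb E u - {x}" "w2 \<in> nb E u - {x}" for w1 w2
  proof (rule ccontr)
    assume "w1 \<noteq> w2"
    have "card (nb E x) - card {u, w1, w2} \<le> card (nb E x - {u, w1, w2})"
      by (rule diff_card_le_card_Diff) simp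
    moreover have "card {u, w1, w2} \<le> 3" by (simp add: card_insert_le_m1)
    ultimately have "n - 4 \<le> card (nb E x - {u, w1, w2})" using dx by (simp add: degree_nb)
    moreover have "card (nb E x - {u, w1, w2}) < n - 4"
      using no_fork[OF u _ _ \<open>w1 \<noteq> w2\<close>] w by blast
    ultimately show False by linarith
  qed
  then have "card (nb E u - {x}) \<le> 1" using finite_nb[OF sg] by (simp add: card_le_Suc0_iff_eq)
  moreover have "card (nb E u) - card {x} \<le> card (nb E u - {x})"
    by (rule diff_card_le_card_Diff) simp
  ultimately show ?thesis by (simp add: degree_nb)
qed

end

section \<open>Connected extremal graphs have maximum degree at most n-4\<close>

text \<open>
  A connected T_n^2-free graph with at least n vertices and the maximum number of edges;
  n \<ge> 7 is needed for the arithmetic of the degree analysis.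
\<close>
locale T2_extremal_graph = T2_free_graph +
  assumes n7: "7 \<le> n" and large: "n \<le> card V"
    and extremal: "card E = ex (card V) (T2_verts n) (T2_edges n)"
    and connected: "connected_graph V E"
begin

lemma weight_lower_bound:
  assumes "S \<subseteq> V" "card S < n"
  shows "card S * (card S - 1) \<le> weight E S"
proof (rule ccontr)
  assume "\<not> ?thesis"
  then have "card E < ex (card V) (T2_verts n) (T2_edges n)"
    using clique_replacement_gains[OF sg T2_free n5 assms] by simp
  with extremal show False by simp
qed

lemma closed_nb_leaving_edge:
  assumes x: "x \<in> V" and dx: "degree E x \<le> n - 2"
  obtains u t where "u \<in> nb E x" "t \<in> nb E u - closed_nb E x"
proof -
  have "card (closed_nb E x) < card V" using card_closed_nb[OF sg] dx large n7 by simp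
  moreover have "finite (closed_nb E x)" by (simp add: closed_nb_def finite_nb[OF sg])
  ultimately have "\<not> V \<subseteq> closed_nb E x" using card_mono[of "closed_nb E x" V] by linarith
  then obtain y where "y \<in> V" "y \<notin> closed_nb E x" by blast
  then obtain a b where ab: "a \<in> closed_nb E x" "b \<notin> closed_nb E x" "{a, b} \<in> E"
    using connected_leaving_edge[OF connected, of x "closed_nb E x" y] x
    by (auto simp: closed_nb_def)
  then have "a \<in> nb E x" by (auto simp: closed_nb_def nb_def)
  moreover have "b \<in> nb E a - closed_nb E x" using ab by (simp add: nb_def)
  ultimately show ?thesis using that by blast
qed

text \<open>Degree at least n-1: n-1 neighbours of x, all of degree at most 2, form a light set.\<close>
lemma degree_lt_n_minus_1:
  assumes "x \<in> V" shows "degree E x < n - 1"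
proof (rule ccontr)
  assume "\<not> ?thesis"
  then have dx: "n - 1 \<le> degree E x" by simp
  then obtain S where S: "S \<subseteq> nb E x" "card S = n - 1"
    by (metis degree_nb obtain_subset_with_card_n)
  have "weight E S \<le> (\<Sum>y\<in>S. 4)"
    unfolding weight_def
  proof (rule sum_mono)
    fix y assume "y \<in> S"
    then have "degree E y \<le> 2" using neighbour_degree_le_2[OF dx] S(1) by blast
    moreover have "card (nb E y - S) \<le> degree E y"
      by (simp add: degree_nb card_mono finite_nb[OF sg])
    ultimately show "degree E y + card (nb E y - S) \<le> 4" by linarith
  qed
  also have "\<dots> = 4 * (n - 1)" using S by simp
  also have "\<dots> < (n - 2) * (n - 1)" using n7 by (intro mult_strict_right_mono) auto
  finally have "weight E S < card S * (card S - 1)"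
    using S by (simp add: mult.commute numeral_2_eq_2)
  moreover have "card S * (card S - 1) \<le> weight E S"
    using S nb_subset[OF sg] n7 by (intro weight_lower_bound) auto
  ultimately show False by simp
qed

text \<open>
  Maximum degree n-2: N[x] has n-1 vertices; every neighbour of x contributes at most
  d = n-2 to its weight, and the one with an edge leaving N[x] at most 3.
\<close>
lemma max_degree_ne_n_minus_2:
  assumes x: "x \<in> V" and max: "\<And>y. degree E y \<le> degree E x"
  shows "degree E x \<noteq> n - 2"
proof
  assume dx: "degree E x = n - 2"
  define d where "d = degree E x"
  define S where "S = closed_nb E x"
  obtain u0 t0 where u0: "u0 \<in> nb E x" "t0 \<in> nb E u0 - S"
    using closed_nb_leaving_edge[OF x] dx S_def by auto
  have finS: "finite S" by (simp add: S_def closed_nb_def finite_nb[OF sg])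
  have u0S: "u0 \<in> S" using u0 by (simp add: S_def closed_nb_def)
  have cS: "card S = d + 1" using card_closed_nb[OF sg] by (simp add: S_def d_def)
  have term_le: "degree E y + card (nb E y - S) \<le> d" if "y \<in> S" for y
  proof (cases "nb E y - S = {}")
    case True
    then have "card (nb E y - S) = 0" by (simp only: card.empty)
    then show ?thesis using max[of y] by (simp add: d_def)
  next
    case False
    then obtain t where "t \<in> nb E y - S" by blast
    moreover have "y \<in> nb E x" using that False by (auto simp: S_def closed_nb_def)
    ultimately show ?thesis
      using escaping_neighbour_weight[of x y t] dx n7 by (simp add: S_def d_def)
  qed
  have "weight E S = (degree E u0 + card (nb E u0 - S))
      + (\<Sum>y\<in>S - {u0}. degree E y + card (nb E y - S))"
    unfolding weight_def using sum.remove[OF finS u0S] by blast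
  also have "\<dots> \<le> 3 + (\<Sum>y\<in>S - {u0}. d)"
    using escaping_neighbour_weight[of x u0 t0] u0 dx term_le
    by (intro add_mono sum_mono) (auto simp: S_def)
  also have "\<dots> = 3 + d * d" using cS u0S finS by simp
  also have "\<dots> < (d + 1) * d" using dx n7 by (simp add: d_def)
  finally have "weight E S < card S * (card S - 1)" using cS by simp
  moreover have "card S * (card S - 1) \<le> weight E S"
    using x nb_subset[OF sg] cS dx n7 by (intro weight_lower_bound) (auto simp: S_def closed_nb_def d_def)
  ultimately show False by simp
qed

text \<open>
  For maximum degree d = n-3 the light set is N[x] \<union> {w} for a suitable w outside N[x];
  it has n-1 vertices, so its weight is at least (d+2)(d+1).
\<close>
lemma weight_closed_nb_extension:
  assumes x: "x \<in> V" and dx: "degree E x = n - 3"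
    and w: "w \<in> V" "w \<notin> closed_nb E x"
  shows "(degree E x + 2) * (degree E x + 1) \<le>
    (degree E w + card (nb E w - insert w (closed_nb E x))) + degree E x
    + (\<Sum>u\<in>nb E x. degree E u + card (nb E u - insert w (closed_nb E x)))"
proof -
  let ?S = "insert w (closed_nb E x)"
  have cS: "card ?S = degree E x + 2"
    using w card_closed_nb[OF sg] finite_nb[OF sg] by (simp add: closed_nb_def)
  have "?S \<subseteq> V" using x w nb_subset[OF sg] by (simp add: closed_nb_def)
  moreover have "card ?S < n" using cS dx n7 by simp
  ultimately have "card ?S * (card ?S - 1) \<le> weight E ?S" by (rule weight_lower_bound)
  then show ?thesis using cS weight_insert_closed_nb[OF sg w(2)] by simp
qed

text \<open>
  Maximum degree d = n-3, first case: a neighbour u of x of full degree d has a neighbour w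
  outside N[x].  Then N[u] \<subseteq> N[x] \<union> {w}, so every vertex of N[x] \<union> {w} contributes at
  most d+1 to its weight, which is therefore below (d+2)(d+1).
\<close>
lemma no_escape_from_full_degree_neighbour:
  assumes x: "x \<in> V" and max: "\<And>y. degree E y \<le> degree E x" and dx: "degree E x = n - 3"
    and u: "u \<in> nb E x" "degree E u = degree E x" and w: "w \<in> nb E u - closed_nb E x"
  shows False
proof -
  define d where "d = degree E x"
  define S where "S = insert w (closed_nb E x)"
  have escape_le_1: "card (nb E v - closed_nb E x) \<le> 1" if "v \<in> nb E x" for v
    using outer_neighbours_le_1 dx that by simp
  have term_nb: "degree E v + card (nb E v - S) \<le> d + 1" if "v \<in> nb E x" for v
  proof -
    have "card (nb E v - S) \<le> card (nb E v - closed_nb E x)"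
      by (rule card_mono) (auto simp: S_def finite_nb[OF sg])
    then show ?thesis using escape_le_1[OF that] max[of v] by (simp add: d_def)
  qed
  have term_w: "degree E w + card (nb E w - S) \<le> d + 1"
  proof -
    have "nb E u - closed_nb E x \<subseteq> {w}"
      using escape_le_1[OF u(1)] w finite_nb[OF sg] by (auto simp: card_le_Suc0_iff_eq)
    then have "closed_nb E u \<subseteq> S" using u(1) by (auto simp: S_def closed_nb_def)
    then have "nb E w - S \<subseteq> nb E w - closed_nb E u" by auto
    moreover have "card (nb E w - closed_nb E u) \<le> 1"
      using outer_neighbours_le_1[of u w] u dx w nb_sym by auto
    ultimately have "card (nb E w - S) \<le> 1"
      using finite_nb[OF sg] by (meson card_mono finite_Diff le_trans)
    then show ?thesis using max[of w] by (simp add: d_def)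
  qed
  have "w \<in> V" "w \<notin> closed_nb E x" using w nb_subset[OF sg] by auto
  then have "(d + 2) * (d + 1) \<le> (degree E w + card (nb E w - S)) + d
      + (\<Sum>v\<in>nb E x. degree E v + card (nb E v - S))"
    using weight_closed_nb_extension[OF x dx] unfolding S_def d_def by blast
  also have "\<dots> \<le> (d + 1) + d + (\<Sum>v\<in>nb E x. d + 1)"
  proof -
    have "(\<Sum>v\<in>nb E x. degree E v + card (nb E v - S)) \<le> (\<Sum>v\<in>nb E x. d + 1)"
      by (rule sum_mono) (rule term_nb)
    then show ?thesis using term_w by linarith
  qed
  also have "\<dots> = (d + 1) + d + d * (d + 1)" by (simp add: d_def degree_nb)
  finally show False by (simp add: algebra_simps)
qed

text \<open>
  Second case: only neighbours of degree below d have edges leaving N[x].  Adding a vertex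
  w outside N[x] adjacent to N[x], the neighbours of x contribute at most d each and w at
  most 2d-1, again below (d+2)(d+1).
\<close>
lemma no_escape_from_lower_degree_neighbour:
  assumes x: "x \<in> V" and max: "\<And>y. degree E y \<le> degree E x" and dx: "degree E x = n - 3"
    and low: "\<And>v. v \<in> nb E x \<Longrightarrow> nb E v - closed_nb E x \<noteq> {} \<Longrightarrow> degree E v < degree E x"
    and u: "u \<in> nb E x" and w: "w \<in> nb E u - closed_nb E x"
  shows False
proof -
  define d where "d = degree E x"
  define S where "S = insert w (closed_nb E x)"
  have term_nb: "degree E v + card (nb E v - S) \<le> d" if v: "v \<in> nb E x" for v
  proof -
    have le: "card (nb E v - S) \<le> card (nb E v - closed_nb E x)"
      by (rule card_mono) (auto simp: S_def finite_nb[OF sg])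
    show ?thesis
    proof (cases "nb E v - closed_nb E x = {}")
      case True
      then have "card (nb E v - closed_nb E x) = 0" by (simp only: card.empty)
      then show ?thesis using le max[of v] by (simp add: d_def)
    next
      case False
      then show ?thesis using le low[OF v] outer_neighbours_le_1[of x v] dx v by (simp add: d_def)
    qed
  qed
  have term_w: "degree E w + card (nb E w - S) \<le> 2 * d - 1"
  proof -
    have "u \<in> nb E w" "u \<in> S" using w u nb_sym[of u E w] by (auto simp: S_def closed_nb_def)
    then show ?thesis using weight_term_with_inner_neighbour[OF sg] max[of w] by (fastforce simp: d_def)
  qed
  have "w \<in> V" "w \<notin> closed_nb E x" using w nb_subset[OF sg] by auto
  then have "(d + 2) * (d + 1) \<le> (degree E w + card (nb E w - S)) + d
      + (\<Sum>v\<in>nb E x. degree E v + card (nb E v - S))"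
    using weight_closed_nb_extension[OF x dx] unfolding S_def d_def by blast
  also have "\<dots> \<le> (2 * d - 1) + d + (\<Sum>v\<in>nb E x. d)"
  proof -
    have "(\<Sum>v\<in>nb E x. degree E v + card (nb E v - S)) \<le> (\<Sum>v\<in>nb E x. d)"
      by (rule sum_mono) (rule term_nb)
    then show ?thesis using term_w by linarith
  qed
  also have "\<dots> = (2 * d - 1) + d + d * d" by (simp add: d_def degree_nb)
  finally show False by (simp add: algebra_simps)
qed

text \<open>Maximum degree n-3: connectivity gives an edge leaving N[x], so one of the two cases applies.\<close>
lemma max_degree_ne_n_minus_3:
  assumes x: "x \<in> V" and max: "\<And>y. degree E y \<le> degree E x"
  shows "degree E x \<noteq> n - 3"
proof
  assume dx: "degree E x = n - 3"
  have "degree E x \<le> n - 2" using dx by simp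
  then obtain u w where uw: "u \<in> nb E x" "w \<in> nb E u - closed_nb E x"
    using closed_nb_leaving_edge[OF x] by blast
  show False
  proof (cases "\<exists>v\<in>nb E x. degree E v = degree E x \<and> nb E v - closed_nb E x \<noteq> {}")
    case True
    then show False using no_escape_from_full_degree_neighbour[OF x max dx] by blast
  next
    case False
    then have "degree E v < degree E x"
      if "v \<in> nb E x" "nb E v - closed_nb E x \<noteq> {}" for v
      using that max[of v] by fastforce
    then show False using no_escape_from_lower_degree_neighbour[OF x max dx _ uw] by blast
  qed
qed

theorem degree_le_n_minus_4:
  assumes "y \<in> V" shows "degree E y \<le> n - 4"
proof -
  have finV: "finite V" and Vne: "V \<noteq> {}"
    using sgraph_finite_vertices[OF sg] large n7 by auto
  have "Max (degree E ` V) \<in> degree E ` V" using finV Vne by simp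
  then obtain x where x: "x \<in> V" "degree E x = Max (degree E ` V)" by auto
  have max: "degree E z \<le> degree E x" for z
    using x finV degree_outside[OF sg, of z] by (cases "z \<in> V") auto
  have "degree E x < n - 1" "degree E x \<noteq> n - 2" "degree E x \<noteq> n - 3"
    using degree_lt_n_minus_1 max_degree_ne_n_minus_2 max_degree_ne_n_minus_3 x(1) max by auto
  then show ?thesis using max[of y] n7 by linarith
qed

end

section \<open>A near-regular graph of degree k on p vertices\<close>

text \<open>
  Vertices 0..<p on a cycle; each i is joined to its next h = k div 2 successors
  (indices taken mod p), and, for odd k, additionally to the opposite vertex i + p div 2.
\<close>
text \<open>wrap p a = a mod p for a < 2p, written so that arithmetic stays linear.\<close>
definition wrap :: "nat \<Rightarrow> nat \<Rightarrow> nat" where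
  "wrap p a = (if a < p then a else a - p)"

definition circulant_edges :: "nat \<Rightarrow> nat \<Rightarrow> nat set set" where
  "circulant_edges p h = (\<lambda>(i, j). {i, wrap p (i + j)}) ` ({0..<p} \<times> {1..h})"

definition antipodal_edges :: "nat \<Rightarrow> nat set set" where
  "antipodal_edges p = (\<lambda>i. {i, i + p div 2}) ` {0..<p div 2}"

definition near_regular_edges :: "nat \<Rightarrow> nat \<Rightarrow> nat set set" where
  "near_regular_edges p k =
     circulant_edges p (k div 2) \<union> (if odd k then antipodal_edges p else {})"

lemma near_regular_sgraph:
  assumes "k < p" shows "sgraph {0..<p} (near_regular_edges p k)"
  unfolding sgraph_def
proof (intro conjI ballI)
  fix e assume "e \<in> near_regular_edges p k"
  then consider (circ) i j where "e = {i, wrap p (i + j)}" "i < p" "1 \<le> j" "j \<le> k div 2"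
    | (anti) i where "e = {i, i + p div 2}" "i < p div 2" "odd k"
    unfolding near_regular_edges_def circulant_edges_def antipodal_edges_def
    by (auto split: if_splits)
  then show "\<exists>x y. x \<noteq> y \<and> x \<in> {0..<p} \<and> y \<in> {0..<p} \<and> e = {x, y}"
  proof cases
    case circ
    have "2 * (k div 2) < p" using assms by presburger
    then have "j < p" using circ(4) by linarith
    then have "wrap p (i + j) \<noteq> i" "wrap p (i + j) < p"
      using circ(2,3) unfolding wrap_def by auto
    then show ?thesis using circ by (intro exI[of _ i] exI[of _ "wrap p (i + j)"]) auto
  next
    case anti
    have "0 < p div 2" using anti(3) assms by presburger
    then have "i + p div 2 \<noteq> i" "i + p div 2 < p" using anti(2) by linarith+
    then show ?thesis using anti by (intro exI[of _ i] exI[of _ "i + p div 2"]) auto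
  qed
qed simp

lemma nb_near_regular_subset:
  "nb (near_regular_edges p k) v \<subseteq>
     (\<lambda>j. wrap p (v + j)) ` {1..k div 2} \<union> (\<lambda>j. wrap p (v + p - j)) ` {1..k div 2}
     \<union> (if odd k then {if v < p div 2 then v + p div 2 else v - p div 2} else {})"
  (is "_ \<subseteq> ?A \<union> ?B \<union> ?C")
proof
  fix u assume "u \<in> nb (near_regular_edges p k) v"
  then consider (circ) i j where "{v, u} = {i, wrap p (i + j)}" "i < p" "1 \<le> j" "j \<le> k div 2"
    | (anti) i where "{v, u} = {i, i + p div 2}" "i < p div 2" "odd k"
    unfolding nb_def near_regular_edges_def circulant_edges_def antipodal_edges_def
    by (auto split: if_splits)
  then show "u \<in> ?A \<union> ?B \<union> ?C"
  proof cases
    case circ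
    then consider "v = i" "u = wrap p (i + j)" | "v = wrap p (i + j)" "u = i"
      by (auto simp: doubleton_eq_iff)
    then show ?thesis
    proof cases
      case 1 then show ?thesis using circ by auto
    next
      case 2
      then have "u = wrap p (v + p - j)" using circ by (auto simp: wrap_def)
      then show ?thesis using circ by auto
    qed
  next
    case anti
    then consider "v = i" "u = i + p div 2" | "v = i + p div 2" "u = i"
      by (auto simp: doubleton_eq_iff)
    then show ?thesis using anti by cases auto
  qed
qed

lemma near_regular_degree: "degree (near_regular_edges p k) v \<le> k"
proof -
  define A where "A = (\<lambda>j. wrap p (v + j)) ` {1..k div 2}"
  define B where "B = (\<lambda>j. wrap p (v + p - j)) ` {1..k div 2}"
  define C where "C = (if odd k then {if v < p div 2 then v + p div 2 else v - p div 2} else {})"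
  have "degree (near_regular_edges p k) v \<le> card (A \<union> B \<union> C)"
    unfolding degree_nb A_def B_def C_def
    by (intro card_mono nb_near_regular_subset) auto
  also have "\<dots> \<le> card A + card B + card C" by (meson card_Un_le le_trans add_le_mono le_refl)
  also have "\<dots> \<le> k div 2 + k div 2 + (if odd k then 1 else 0)"
    using card_image_le[of "{1..k div 2}"] by (intro add_mono) (auto simp: A_def B_def C_def)
  also have "\<dots> = k" by presburger
  finally show ?thesis .
qed

lemma card_circulant_edges:
  assumes hp: "2 * h < p" shows "card (circulant_edges p h) = p * h"
proof -
  have "inj_on (\<lambda>(i, j). {i, wrap p (i + j)}) ({0..<p} \<times> {1..h})"
  proof (rule inj_onI)
    fix x y assume xy: "x \<in> {0..<p} \<times> {1..h}" "y \<in> {0..<p} \<times> {1..h}"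
      "(\<lambda>(i, j). {i, wrap p (i + j)}) x = (\<lambda>(i, j). {i, wrap p (i + j)}) y"
    obtain i j i' j' where x: "x = (i, j)" and y: "y = (i', j')" by fastforce
    have a: "i < p" "1 \<le> j" "j \<le> h" "i' < p" "1 \<le> j'" "j' \<le> h"
      "{i, wrap p (i + j)} = {i', wrap p (i' + j')}" using xy x y by auto
    then consider "i = i'" "wrap p (i + j) = wrap p (i' + j')"
      | "i = wrap p (i' + j')" "wrap p (i + j) = i'"
      by (auto simp: doubleton_eq_iff)
    then have "i = i' \<and> j = j'"
    proof cases
      case 1 then show ?thesis using a hp unfolding wrap_def by (auto split: if_splits)
    next
      case 2 then show ?thesis using a hp unfolding wrap_def by (auto split: if_splits)
    qed
    then show "x = y" using x y by simp
  qed
  then show ?thesis unfolding circulant_edges_def by (simp add: card_image)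
qed

lemma card_antipodal_edges: "card (antipodal_edges p) = p div 2"
  unfolding antipodal_edges_def by (auto simp: card_image inj_on_def doubleton_eq_iff)

lemma circulant_antipodal_disjoint:
  assumes "2 * h < p" "h < p div 2"
  shows "circulant_edges p h \<inter> antipodal_edges p = {}"
proof (rule ccontr)
  assume "\<not> ?thesis"
  then obtain i j i' where a: "i < p" "1 \<le> j" "j \<le> h" "i' < p div 2"
    "{i, wrap p (i + j)} = {i', i' + p div 2}"
    unfolding circulant_edges_def antipodal_edges_def by auto
  then consider "i = i'" "wrap p (i + j) = i' + p div 2" | "i = i' + p div 2" "wrap p (i + j) = i'"
    by (auto simp: doubleton_eq_iff)
  then show False using a assms by cases (auto simp: wrap_def split: if_splits)
qed

lemma near_regular_card:
  assumes "k < p" shows "card (near_regular_edges p k) = k * p div 2"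
proof (cases "odd k")
  case True
  have "2 * (k div 2) < p" "k div 2 < p div 2" using assms True by (auto elim!: oddE)
  moreover have "finite (circulant_edges p (k div 2))" "finite (antipodal_edges p)"
    by (simp_all add: circulant_edges_def antipodal_edges_def)
  ultimately have "card (near_regular_edges p k) = p * (k div 2) + p div 2"
    using True card_Un_disjoint[OF _ _ circulant_antipodal_disjoint]
      card_circulant_edges card_antipodal_edges
    by (simp add: near_regular_edges_def)
  moreover have "k * p = 2 * (p * (k div 2)) + p" using True by (auto elim!: oddE simp: algebra_simps)
  ultimately show ?thesis by simp
next
  case False
  then show ?thesis using assms card_circulant_edges[of "k div 2" p]
    by (auto simp: near_regular_edges_def elim!: evenE)
qed

lemma ex_T2_lower_bound:
  assumes "n \<ge> 5" "n - 4 < p"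
  shows "(n - 4) * p div 2 \<le> ex p (T2_verts n) (T2_edges n)"
proof -
  let ?F = "near_regular_edges p (n - 4)"
  have F: "sgraph {0..<p} ?F" "card ?F = (n - 4) * p div 2"
    using assms(2) by (simp_all add: near_regular_sgraph near_regular_card)
  have free: "\<not> contains {0..<p} ?F (T2_verts n) (T2_edges n)"
    using T2_free_if_degree_le[OF F(1)] near_regular_degree assms(1) by simp
  show ?thesis using card_le_ex[OF F(1) _ free] F(2) by simp
qed

lemma max_degree_eq_bound:
  assumes sg: "sgraph V E" and deg: "\<forall>y\<in>V. degree E y \<le> k"
    and many: "k * card V \<le> 2 * card E + 1" and two: "2 \<le> card V"
  shows "max_degree V E = k"
proof -
  have finV: "finite V" and Vne: "V \<noteq> {}" using sg two by (auto simp: sgraph_finite_vertices)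
  then have le: "max_degree V E \<le> k" using deg by (simp add: max_degree_def)
  have "2 * card E \<le> max_degree V E * card V"
    using edges_le_degree_bound[OF sg] finV by (simp add: max_degree_def)
  then have close: "k * card V \<le> max_degree V E * card V + 1" using many by linarith
  show ?thesis
  proof (rule ccontr)
    assume "max_degree V E \<noteq> k"
    then have "Suc (max_degree V E) \<le> k" using le by simp
    then have "Suc (max_degree V E) * card V \<le> k * card V" by (rule mult_le_mono1)
    then show False using close two by simp
  qed
qed

theorem lemma3p3:
  fixes p n :: nat and V :: "'a set" and E :: "'a set set"
  assumes "n \<ge> 7" and "p \<ge> n"
    and "in_Ex p (T2_verts n) (T2_edges n) V E"
    and "connected_graph V E"
  shows "max_degree V E = n - 4 \<and> card E = ((n - 4) * p) div 2"
proof -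
  have sg: "sgraph V E" and cV: "card V = p"
    and free: "\<not> contains V E (T2_verts n) (T2_edges n)"
    and max_edges: "card E = ex p (T2_verts n) (T2_edges n)"
    using assms(3) by (auto simp: in_Ex_def)
  interpret T2_extremal_graph V E n
    using sg cV free max_edges assms(1,2,4) by unfold_locales auto
  have deg: "\<forall>y\<in>V. degree E y \<le> n - 4" using degree_le_n_minus_4 by blast
  have upper: "2 * card E \<le> (n - 4) * p" using edges_le_degree_bound[OF sg deg] cV by simp
  have "(n - 4) * p div 2 \<le> card E"
    using ex_T2_lower_bound[of n p] assms(1,2) max_edges by simp
  then have edges: "card E = (n - 4) * p div 2" using upper by linarith
  then have "max_degree V E = n - 4"
    using max_degree_eq_bound[OF sg deg] cV assms(1,2) by simp
  with edges show ?thesis by simp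
qed

end
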